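(* Let $\tilde X\in\mathbb{R}^{n\times k}$ have columns of unit Euclidean norm ($\Gamma_{\ell\ell}=1$ for all $\ell$, $\Gamma=\tilde X^t\tilde X$), let $0<\nu<1$, and let $\mathcal{I}\subset\{1,\dots,k\}$ satisfy $\tau(\mathcal{I})\le\nu$. Then for every $x\in\mathbb{R}^n$, $$(1+\nu)^{-1}\sum_{\ell\in\mathcal{I}}\Big(\sum_{i=1}^n x_i\tilde X_{i\ell}\Big)^2\le \|P_{V_{\mathcal{I}}}x\|_2^2\le (1-\nu)^{-1}\sum_{\ell\in\mathcal{I}}\Big(\sum_{i=1}^n x_i\tilde X_{i\ell}\Big)^2.$$
   Context: $\mathcal{G}_1,\dots,\mathcal{G}_p$ is a partition of $\{1,\dots,k\}$ into groups with $t_j=\#\mathcal{G}_j$; each index $\ell$ is written $\ell=(j,t)$ with $j$ the group containing $\ell$ and $t\in\{1,\dots,t_j\}$ its rank inside $\mathcal{G}_j$. $V_{\mathcal{I}}$ is the linear span of the columns $\tilde X_{\bullet\ell}$, $\ell\in\mathcal{I}$, and $P_{V_{\mathcal{I}}}$ the orthogonal projection onto it. $\gamma_{BT}=\sup\{|\Gamma_{(j,t)(j',t')}|: t\neq t'\}$ (over all $j,j'$ and admissible ranks), $\gamma_{BG}=\sup\{|\Gamma_{(j,t)(j',t)}|: j\ne j',\ t\le t_j\wedge t_{j'}\}$, and $\tau(\mathcal{I})=\#(\mathcal{I})\,\gamma_{BT}+\#\{j:\exists t,\ (j,t)\in\mathcal{I}\}\,\gamma_{BG}$. *)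

theory Defs
  imports "HOL-Analysis.Analysis"
begin

definition orth_proj :: "('a::euclidean_space) set \<Rightarrow> 'a \<Rightarrow> 'a" where
  "orth_proj S x = (THE p. p \<in> span S \<and> (\<forall>v\<in>span S. (x - p) \<bullet> v = 0))"

definition gram :: "real^'k^'n \<Rightarrow> 'k \<Rightarrow> 'k \<Rightarrow> real" where
  "gram X l l' = (\<Sum>i\<in>UNIV. X $ i $ l * X $ i $ l')"

text \<open>Group structure: g l is the group of column l, r l its rank inside the group.
  Each group G_j = {l. g l = j} is ranked bijectively by 1..#G_j.\<close>
definition group_ranking :: "('k::finite \<Rightarrow> 'j) \<Rightarrow> ('k \<Rightarrow> nat) \<Rightarrow> bool" where
  "group_ranking g r \<longleftrightarrow>
     (\<forall>j. bij_betw r {l. g l = j} {1..card {l. g l = j}})"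

text \<open>gamma_BT: sup of |Gamma_(l,l')| over pairs of different ranks (sup of empty set := 0).\<close>
definition gamma_BT :: "real^'k::finite^'n::finite \<Rightarrow> ('k \<Rightarrow> nat) \<Rightarrow> real" where
  "gamma_BT X r = Max (insert 0 {\<bar>gram X l l'\<bar> | l l'. r l \<noteq> r l'})"

definition gamma_BG :: "real^'k::finite^'n::finite \<Rightarrow> ('k \<Rightarrow> 'j) \<Rightarrow> ('k \<Rightarrow> nat) \<Rightarrow> real" where
  "gamma_BG X g r = Max (insert 0 {\<bar>gram X l l'\<bar> | l l'. g l \<noteq> g l' \<and> r l = r l'})"

definition tau :: "real^'k::finite^'n::finite \<Rightarrow> ('k \<Rightarrow> 'j) \<Rightarrow> ('k \<Rightarrow> nat) \<Rightarrow> 'k set \<Rightarrow> real" where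
  "tau X g r I = real (card I) * gamma_BT X r + real (card (g ` I)) * gamma_BG X g r"

end

(* For l in I, the off-diagonal Gram entries Gamma_(l,l') with l' in I have absolute row
   sum at most tau(I) <= nu: entries of a different rank are bounded by gamma_BT, and columns
   of the same rank lie in different groups, at most one per group, so they contribute at most
   #groups(I) * gamma_BG.  By the Schur test the columns then satisfy the Riesz bounds
   (1 - nu) |b|^2 <= |sum_l b_l X_l|^2 <= (1 + nu) |b|^2.  Since <x, X_l> = <P x, X_l>,
   Cauchy-Schwarz against sum_l <x, X_l> X_l gives the lower bound, and Cauchy-Schwarz on
   the coefficients of P x = sum_l a_l X_l gives the upper bound. *)

theory Submission
  imports Defs
begin

lemma in_span_image_sum:
  fixes w :: "'k \<Rightarrow> 'a::real_vector"
  assumes "finite I" and "p \<in> span (w ` I)"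
  shows "\<exists>a. p = (\<Sum>l\<in>I. a l *\<^sub>R w l)"
  using assms(2)
proof (induction rule: span_induct_alt)
  case base
  show ?case by (rule exI[of _ "\<lambda>_. 0"]) simp
next
  case (step c v y)
  then obtain l a where l: "l \<in> I" "v = w l" and y: "y = (\<Sum>l\<in>I. a l *\<^sub>R w l)" by blast
  show ?case
  proof (intro exI)
    show "c *\<^sub>R v + y = (\<Sum>l'\<in>I. (a l' + (if l' = l then c else 0)) *\<^sub>R w l')"
      using l assms(1)
      by (simp add: y scaleR_add_left sum.distrib if_distrib[of "\<lambda>t. t *\<^sub>R _"] cong: if_cong)
  qed
qed

lemma orth_proj_eqI:
  assumes "y \<in> span S" and "\<And>v. v \<in> span S \<Longrightarrow> (x - y) \<bullet> v = 0"
  shows "orth_proj S x = y"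
  unfolding orth_proj_def
proof (rule the_equality)
  show "y \<in> span S \<and> (\<forall>v\<in>span S. (x - y) \<bullet> v = 0)" using assms by blast
next
  fix q assume q: "q \<in> span S \<and> (\<forall>v\<in>span S. (x - q) \<bullet> v = 0)"
  have "q - y \<in> span S" using q assms(1) by (simp add: span_diff)
  have "(q - y) \<bullet> (q - y) = (x - y) \<bullet> (q - y) - (x - q) \<bullet> (q - y)"
    by (simp add: inner_diff_left)
  also have "\<dots> = 0" using q assms(2) \<open>q - y \<in> span S\<close> by simp
  finally show "q = y" by simp
qed

lemma
  fixes S :: "'a::euclidean_space set"
  shows orth_proj_in_span: "orth_proj S x \<in> span S"
    and inner_orth_proj: "v \<in> span S \<Longrightarrow> orth_proj S x \<bullet> v = x \<bullet> v"
proof -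
  obtain y z where y: "y \<in> span S" and z: "\<And>v. v \<in> span S \<Longrightarrow> orthogonal z v" and "x = y + z"
    using orthogonal_subspace_decomp_exists by blast
  then have "orth_proj S x = y"
    by (intro orth_proj_eqI) (auto simp: orthogonal_def)
  then show "orth_proj S x \<in> span S" and "v \<in> span S \<Longrightarrow> orth_proj S x \<bullet> v = x \<bullet> v"
    using y z \<open>x = y + z\<close> by (auto simp: orthogonal_def inner_add_left)
qed

lemma mult_self_le_mult_imp_le:
  fixes a b :: "'a::linordered_idom"
  assumes "a * a \<le> a * b" and "0 \<le> b"
  shows "a \<le> b"
proof (cases "0 < a")
  case True
  with assms(1) show ?thesis by (rule mult_left_le_imp_le)
qed (use assms(2) in auto)

lemma abs_mult_le_half_sum_squares:
  fixes a b :: real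
  shows "\<bar>a * b\<bar> \<le> (a\<^sup>2 + b\<^sup>2) / 2"
  using sum_squares_ge_zero[of "\<bar>a\<bar> - \<bar>b\<bar>" 0]
  by (simp add: abs_mult power2_eq_square algebra_simps)

lemma abs_sum_offdiag_form_le:
  fixes G :: "'k \<Rightarrow> 'k \<Rightarrow> real" and b :: "'k \<Rightarrow> real"
  assumes fin: "finite I" and sym: "\<And>l l'. G l l' = G l' l"
    and row: "\<And>l. l \<in> I \<Longrightarrow> (\<Sum>l'\<in>I - {l}. \<bar>G l l'\<bar>) \<le> \<nu>"
  shows "\<bar>\<Sum>l\<in>I. \<Sum>l'\<in>I - {l}. b l * b l' * G l l'\<bar> \<le> \<nu> * (\<Sum>l\<in>I. (b l)\<^sup>2)"
proof -
  have offdiag: "I - {l} = {l'. l' \<in> I \<and> l' \<noteq> l}" for l by blast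
  have "\<bar>\<Sum>l\<in>I. \<Sum>l'\<in>I - {l}. b l * b l' * G l l'\<bar>
      \<le> (\<Sum>l\<in>I. \<Sum>l'\<in>I - {l}. \<bar>b l * b l'\<bar> * \<bar>G l l'\<bar>)"
    by (rule order_trans[OF sum_abs sum_mono[OF order_trans[OF sum_abs]]]) (simp add: abs_mult)
  also have "\<dots> \<le> (\<Sum>l\<in>I. \<Sum>l'\<in>I - {l}. ((b l)\<^sup>2 + (b l')\<^sup>2) / 2 * \<bar>G l l'\<bar>)"
    by (intro sum_mono mult_right_mono abs_mult_le_half_sum_squares) simp
  also have "\<dots> = (\<Sum>l\<in>I. \<Sum>l'\<in>I - {l}. (b l)\<^sup>2 / 2 * \<bar>G l l'\<bar>)
                  + (\<Sum>l\<in>I. \<Sum>l'\<in>I - {l}. (b l')\<^sup>2 / 2 * \<bar>G l l'\<bar>)"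
    by (simp add: sum.distrib add_divide_distrib distrib_right)
  also have "(\<Sum>l\<in>I. \<Sum>l'\<in>I - {l}. (b l')\<^sup>2 / 2 * \<bar>G l l'\<bar>)
           = (\<Sum>l\<in>I. \<Sum>l'\<in>I - {l}. (b l)\<^sup>2 / 2 * \<bar>G l l'\<bar>)"
    unfolding offdiag using fin
    by (subst sum.swap_restrict) (auto simp: sym intro!: sum.cong arg_cong2[where f=sum])
  also have "(\<Sum>l\<in>I. \<Sum>l'\<in>I - {l}. (b l)\<^sup>2 / 2 * \<bar>G l l'\<bar>)
           + (\<Sum>l\<in>I. \<Sum>l'\<in>I - {l}. (b l)\<^sup>2 / 2 * \<bar>G l l'\<bar>)
           = (\<Sum>l\<in>I. (b l)\<^sup>2 * (\<Sum>l'\<in>I - {l}. \<bar>G l l'\<bar>))"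
    by (simp add: sum_distrib_left mult.commute flip: sum.distrib)
  also have "\<dots> \<le> (\<Sum>l\<in>I. (b l)\<^sup>2 * \<nu>)"
    by (intro sum_mono mult_left_mono row) auto
  finally show ?thesis by (simp add: sum_distrib_left mult.commute)
qed

lemma norm_sum_scaleR_sq:
  fixes w :: "'k \<Rightarrow> 'a::real_inner"
  assumes "finite I"
  shows "(norm (\<Sum>l\<in>I. b l *\<^sub>R w l))\<^sup>2
       = (\<Sum>l\<in>I. (b l)\<^sup>2 * (norm (w l))\<^sup>2) + (\<Sum>l\<in>I. \<Sum>l'\<in>I - {l}. b l * b l' * (w l \<bullet> w l'))"
proof -
  have "(norm (\<Sum>l\<in>I. b l *\<^sub>R w l))\<^sup>2 = (\<Sum>l\<in>I. \<Sum>l'\<in>I. b l * b l' * (w l \<bullet> w l'))"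
    unfolding power2_norm_eq_inner inner_sum_left inner_sum_right sum_distrib_left
    by (subst sum.swap) (simp add: inner_commute mult.assoc)
  also have "\<dots> = (\<Sum>l\<in>I. (b l)\<^sup>2 * (norm (w l))\<^sup>2 + (\<Sum>l'\<in>I - {l}. b l * b l' * (w l \<bullet> w l')))"
    using assms
    by (intro sum.cong refl) (simp add: sum.remove power2_eq_square flip: power2_norm_eq_inner)
  finally show ?thesis by (simp add: sum.distrib)
qed

lemma abs_norm_sum_scaleR_sq_diff_le:
  fixes w :: "'k \<Rightarrow> 'a::real_inner"
  assumes fin: "finite I" and unit: "\<And>l. l \<in> I \<Longrightarrow> norm (w l) = 1"
    and row: "\<And>l. l \<in> I \<Longrightarrow> (\<Sum>l'\<in>I - {l}. \<bar>w l \<bullet> w l'\<bar>) \<le> \<nu>"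
  shows "\<bar>(norm (\<Sum>l\<in>I. b l *\<^sub>R w l))\<^sup>2 - (\<Sum>l\<in>I. (b l)\<^sup>2)\<bar> \<le> \<nu> * (\<Sum>l\<in>I. (b l)\<^sup>2)"
proof -
  have "(norm (\<Sum>l\<in>I. b l *\<^sub>R w l))\<^sup>2 - (\<Sum>l\<in>I. (b l)\<^sup>2)
      = (\<Sum>l\<in>I. \<Sum>l'\<in>I - {l}. b l * b l' * (w l \<bullet> w l'))"
    using unit by (simp add: norm_sum_scaleR_sq[OF fin])
  also have "\<bar>\<dots>\<bar> \<le> \<nu> * (\<Sum>l\<in>I. (b l)\<^sup>2)"
    using fin row by (rule abs_sum_offdiag_form_le[OF _ inner_commute])
  finally show ?thesis .
qed

lemma sum_inner_sq_le_norm_orth_proj: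
  fixes w :: "'k \<Rightarrow> 'a::euclidean_space"
  assumes "finite I" and "0 \<le> B"
    and bessel: "\<And>b. (norm (\<Sum>l\<in>I. b l *\<^sub>R w l))\<^sup>2 \<le> B * (\<Sum>l\<in>I. (b l)\<^sup>2)"
  shows "(\<Sum>l\<in>I. (x \<bullet> w l)\<^sup>2) \<le> B * (norm (orth_proj (w ` I) x))\<^sup>2"
proof -
  define p where "p = orth_proj (w ` I) x"
  define q where "q = (\<Sum>l\<in>I. (x \<bullet> w l) *\<^sub>R w l)"
  define C where "C = (\<Sum>l\<in>I. (x \<bullet> w l)\<^sup>2)"
  have "p \<bullet> w l = x \<bullet> w l" if "l \<in> I" for l
    using that by (simp add: p_def inner_orth_proj span_base)
  then have "C = p \<bullet> q"
    by (simp add: C_def q_def inner_sum_right power2_eq_square)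
  then have "C\<^sup>2 \<le> (norm p)\<^sup>2 * (norm q)\<^sup>2"
    using Cauchy_Schwarz_ineq[of p q] by (simp add: power2_norm_eq_inner)
  also have "\<dots> \<le> (norm p)\<^sup>2 * (B * C)"
    using bessel[of "\<lambda>l. x \<bullet> w l"] by (simp add: q_def C_def mult_left_mono)
  finally have "C * C \<le> C * (B * (norm p)\<^sup>2)"
    by (simp add: power2_eq_square mult_ac)
  then show ?thesis
    unfolding C_def p_def by (rule mult_self_le_mult_imp_le) (simp add: \<open>0 \<le> B\<close>)
qed

lemma norm_orth_proj_le_sum_inner_sq:
  fixes w :: "'k \<Rightarrow> 'a::euclidean_space"
  assumes "finite I" and "0 \<le> A"
    and riesz: "\<And>b. A * (\<Sum>l\<in>I. (b l)\<^sup>2) \<le> (norm (\<Sum>l\<in>I. b l *\<^sub>R w l))\<^sup>2"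
  shows "A * (norm (orth_proj (w ` I) x))\<^sup>2 \<le> (\<Sum>l\<in>I. (x \<bullet> w l)\<^sup>2)"
proof -
  define p where "p = orth_proj (w ` I) x"
  define N where "N = (norm p)\<^sup>2"
  define C where "C = (\<Sum>l\<in>I. (x \<bullet> w l)\<^sup>2)"
  obtain a where a: "p = (\<Sum>l\<in>I. a l *\<^sub>R w l)"
    using in_span_image_sum[OF \<open>finite I\<close> orth_proj_in_span] p_def by blast
  have inner_p: "p \<bullet> w l = x \<bullet> w l" if "l \<in> I" for l
    using that by (simp add: p_def inner_orth_proj span_base)
  have "N = p \<bullet> p" by (simp add: N_def power2_norm_eq_inner)
  also have "\<dots> = (\<Sum>l\<in>I. a l * (p \<bullet> w l))" by (subst (2) a) (simp add: inner_sum_right)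
  also have "\<dots> = (\<Sum>l\<in>I. a l * (x \<bullet> w l))" using inner_p by simp
  finally have "N\<^sup>2 \<le> (\<Sum>l\<in>I. (a l)\<^sup>2) * C"
    by (simp add: C_def Cauchy_Schwarz_ineq_sum)
  then have "A * N\<^sup>2 \<le> (A * (\<Sum>l\<in>I. (a l)\<^sup>2)) * C"
    using \<open>0 \<le> A\<close> by (simp add: mult_left_mono mult.assoc)
  also have "\<dots> \<le> N * C"
    using riesz[of a] by (intro mult_right_mono) (simp_all add: N_def a C_def sum_nonneg)
  finally have "(A * N) * (A * N) \<le> (A * N) * C"
    using \<open>0 \<le> A\<close> by (simp add: power2_eq_square mult_left_mono mult_ac)
  then show ?thesis
    unfolding C_def N_def p_def by (rule mult_self_le_mult_imp_le) (simp add: sum_nonneg)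
qed

lemma gram_eq_inner_column: "gram X l l' = column l X \<bullet> column l' X"
  by (simp add: gram_def column_def inner_vec_def)

lemma finite_abs_gram_set: "finite {\<bar>gram X l l'\<bar> | l l'. P l l'}"
  for X :: "real^'k::finite^'n::finite"
  by (rule finite_subset[of _ "(\<lambda>(l, l'). \<bar>gram X l l'\<bar>) ` UNIV"]) auto

lemma abs_gram_le_gamma_BT: "r l \<noteq> r l' \<Longrightarrow> \<bar>gram X l l'\<bar> \<le> gamma_BT X r"
  unfolding gamma_BT_def by (rule Max_ge) (auto simp: finite_abs_gram_set)

lemma gamma_BT_nonneg: "0 \<le> gamma_BT X r"
  unfolding gamma_BT_def by (rule Max_ge) (auto simp: finite_abs_gram_set)

lemma abs_gram_le_gamma_BG: "g l \<noteq> g l' \<Longrightarrow> r l = r l' \<Longrightarrow> \<bar>gram X l l'\<bar> \<le> gamma_BG X g r"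
  unfolding gamma_BG_def by (rule Max_ge) (auto simp: finite_abs_gram_set)

lemma gamma_BG_nonneg: "0 \<le> gamma_BG X g r"
  unfolding gamma_BG_def by (rule Max_ge) (auto simp: finite_abs_gram_set)

lemma group_ranking_eqD:
  assumes "group_ranking g r" and "g l = g l'" and "r l = r l'"
  shows "l = l'"
proof -
  have "inj_on r {m. g m = g l}"
    using assms(1) by (simp add: group_ranking_def bij_betw_def)
  then show ?thesis using assms(2,3) by (auto dest: inj_onD)
qed

lemma sum_abs_gram_le_tau:
  fixes X :: "real^'k::finite^'n::finite"
  assumes groups: "group_ranking g r"
  shows "(\<Sum>l'\<in>I - {l}. \<bar>gram X l l'\<bar>) \<le> tau X g r I"
proof -
  define T where "T = {l'\<in>I. r l' \<noteq> r l}"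
  define G where "G = {l'\<in>I - {l}. r l' = r l}"
  have other_group: "g l \<noteq> g l'" if "l' \<in> G" for l'
    using that group_ranking_eqD[OF groups, of l l'] by (auto simp: G_def)
  have "I - {l} = T \<union> G" and "T \<inter> G = {}" by (auto simp: T_def G_def)
  then have "(\<Sum>l'\<in>I - {l}. \<bar>gram X l l'\<bar>)
      = (\<Sum>l'\<in>T. \<bar>gram X l l'\<bar>) + (\<Sum>l'\<in>G. \<bar>gram X l l'\<bar>)"
    by (simp add: sum.union_disjoint)
  also have "(\<Sum>l'\<in>T. \<bar>gram X l l'\<bar>) \<le> real (card T) * gamma_BT X r"
    by (rule sum_bounded_above) (simp add: T_def abs_gram_le_gamma_BT)
  also have "\<dots> \<le> real (card I) * gamma_BT X r"
    by (intro mult_right_mono gamma_BT_nonneg) (simp add: T_def card_mono)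
  also have "(\<Sum>l'\<in>G. \<bar>gram X l l'\<bar>) \<le> real (card G) * gamma_BG X g r"
    using other_group by (intro sum_bounded_above abs_gram_le_gamma_BG) (auto simp: G_def)
  also have "card G = card (g ` G)"
    using group_ranking_eqD[OF groups]
    by (intro card_image[symmetric] inj_onI) (auto simp: G_def)
  also have "real (card (g ` G)) * gamma_BG X g r \<le> real (card (g ` I)) * gamma_BG X g r"
    by (intro mult_right_mono gamma_BG_nonneg) (auto simp: G_def intro!: card_mono)
  finally show ?thesis by (simp add: tau_def)
qed

theorem lemma2:
  fixes X :: "real^'k::finite^'n::finite" and g :: "'k \<Rightarrow> nat" and r :: "'k \<Rightarrow> nat"
    and \<nu> :: real and I :: "'k set" and x :: "real^'n"
  assumes groups: "group_ranking g r"
    and unit: "\<And>l. gram X l l = 1"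
    and nu: "0 < \<nu>" "\<nu> < 1"
    and tauI: "tau X g r I \<le> \<nu>"
  shows "inverse (1 + \<nu>) * (\<Sum>l\<in>I. (\<Sum>i\<in>UNIV. x $ i * X $ i $ l)\<^sup>2)
           \<le> (norm (orth_proj ((\<lambda>l. column l X) ` I) x))\<^sup>2 \<and>
         (norm (orth_proj ((\<lambda>l. column l X) ` I) x))\<^sup>2
           \<le> inverse (1 - \<nu>) * (\<Sum>l\<in>I. (\<Sum>i\<in>UNIV. x $ i * X $ i $ l)\<^sup>2)"
proof -
  define w where "w l = column l X" for l
  have "norm (w l) = 1" for l
    using unit[of l] by (simp add: w_def gram_eq_inner_column norm_eq_sqrt_inner)
  moreover have "(\<Sum>l'\<in>I - {l}. \<bar>w l \<bullet> w l'\<bar>) \<le> \<nu>" for l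
    using sum_abs_gram_le_tau[OF groups, where X=X and I=I and l=l] tauI
    by (simp add: w_def gram_eq_inner_column)
  ultimately have riesz:
    "\<bar>(norm (\<Sum>l\<in>I. b l *\<^sub>R w l))\<^sup>2 - (\<Sum>l\<in>I. (b l)\<^sup>2)\<bar> \<le> \<nu> * (\<Sum>l\<in>I. (b l)\<^sup>2)"
    for b by (intro abs_norm_sum_scaleR_sq_diff_le) simp_all
  have "(\<Sum>l\<in>I. (x \<bullet> w l)\<^sup>2) \<le> (1 + \<nu>) * (norm (orth_proj (w ` I) x))\<^sup>2"
    using riesz nu by (intro sum_inner_sq_le_norm_orth_proj) (simp_all add: abs_le_iff algebra_simps)
  moreover have "(1 - \<nu>) * (norm (orth_proj (w ` I) x))\<^sup>2 \<le> (\<Sum>l\<in>I. (x \<bullet> w l)\<^sup>2)"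
    using riesz nu by (intro norm_orth_proj_le_sum_inner_sq) (simp_all add: abs_le_iff algebra_simps)
  moreover have "x \<bullet> w l = (\<Sum>i\<in>UNIV. x $ i * X $ i $ l)" for l
    by (simp add: w_def column_def inner_vec_def)
  ultimately show ?thesis
    using nu by (simp add: w_def[abs_def] field_simps)
qed

end
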